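(* Let $k\ge 2$ and $n\ge 3$ be integers and $\ell\ge 0$. Let ${\sf S}^{(c)}_k(n,\ell)$ denote the number of circular $k$-noncrossing RNA structures on $\{1,\dots,n\}$ with exactly $\ell$ isolated vertices, ${\sf S}^{(c)}_k(n)=\sum_\ell {\sf S}^{(c)}_k(n,\ell)$, and $f_k(m,\ell)$ the number of $k$-noncrossing digraphs on $\{1,\dots,m\}$ with exactly $\ell$ isolated vertices ($f_k(m,\ell)=0$ if $\ell>m$). Then $$ {\sf S}^{(c)}_k(n,\ell)=\sum_{b=0}^{\lfloor (n-\ell)/2\rfloor}(-1)^b\left[\binom{(n-2)-(b-1)}{b-1}+\binom{n-b}{b}\right]f_k(n-2b,\ell), $$ and $$ {\sf S}^{(c)}_k(n)=\sum_{b=0}^{\lfloor n/2\rfloor}(-1)^b\left[\binom{(n-2)-(b-1)}{b-1}+\binom{n-b}{b}\right]\left\{\sum_{\ell=0}^{n-2b}f_k(n-2b,\ell)\right\}, $$ where $\binom{m}{-1}:=0$ and $\binom{m}{r}:=0$ if $0\le m<r$.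
   Context: A digraph on $\{1,\dots,n\}$ is a set of arcs $(i,j)$ with $1\le i<j\le n$. It is $k$-noncrossing if every vertex lies in at most one arc and there are no $k$ arcs $(i_1,j_1),\dots,(i_k,j_k)$ with $i_1<\dots<i_k<j_1<\dots<j_k$. A vertex is isolated if it lies in no arc. A circular $k$-noncrossing RNA structure on $\{1,\dots,n\}$ is a $k$-noncrossing digraph containing no arc of the form $(i,i+1)$, $1\le i\le n-1$, and no arc $(1,n)$ (i.e. no $1$-arc with indices taken modulo $n$). *)

theory Defs
  imports Main
begin

definition digraph :: "nat \<Rightarrow> (nat \<times> nat) set \<Rightarrow> bool" where
  "digraph n A \<longleftrightarrow> A \<subseteq> {(i, j). 1 \<le> i \<and> i < j \<and> j \<le> n}"

definition vertex_disjoint :: "(nat \<times> nat) set \<Rightarrow> bool" where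
  "vertex_disjoint A \<longleftrightarrow>
     (\<forall>a\<in>A. \<forall>b\<in>A. {fst a, snd a} \<inter> {fst b, snd b} \<noteq> {} \<longrightarrow> a = b)"

text \<open>A k-crossing: arcs s 0, ..., s (k-1) with i_1 < ... < i_k < j_1 < ... < j_k.\<close>
definition has_k_crossing :: "nat \<Rightarrow> (nat \<times> nat) set \<Rightarrow> bool" where
  "has_k_crossing k A \<longleftrightarrow>
     (\<exists>s :: nat \<Rightarrow> nat \<times> nat.
        (\<forall>t<k. s t \<in> A) \<and>
        (\<forall>t. t + 1 < k \<longrightarrow> fst (s t) < fst (s (t + 1)) \<and> snd (s t) < snd (s (t + 1))) \<and>
        fst (s (k - 1)) < snd (s 0))"

definition k_noncrossing :: "nat \<Rightarrow> nat \<Rightarrow> (nat \<times> nat) set \<Rightarrow> bool" where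
  "k_noncrossing k n A \<longleftrightarrow> digraph n A \<and> vertex_disjoint A \<and> \<not> has_k_crossing k A"

definition num_isolated :: "nat \<Rightarrow> (nat \<times> nat) set \<Rightarrow> nat" where
  "num_isolated n A = card {v \<in> {1..n}. \<forall>(i, j)\<in>A. v \<noteq> i \<and> v \<noteq> j}"

definition circular_rna :: "nat \<Rightarrow> nat \<Rightarrow> (nat \<times> nat) set \<Rightarrow> bool" where
  "circular_rna k n A \<longleftrightarrow> k_noncrossing k n A \<and>
     (\<forall>i. 1 \<le> i \<and> i + 1 \<le> n \<longrightarrow> (i, i + 1) \<notin> A) \<and> (1, n) \<notin> A"

definition f_k :: "nat \<Rightarrow> nat \<Rightarrow> nat \<Rightarrow> nat" where
  "f_k k m l = card {A. k_noncrossing k m A \<and> num_isolated m A = l}"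

definition S_circ :: "nat \<Rightarrow> nat \<Rightarrow> nat \<Rightarrow> nat" where
  "S_circ k n l = card {A. circular_rna k n A \<and> num_isolated n A = l}"

definition S_circ_total :: "nat \<Rightarrow> nat \<Rightarrow> nat" where
  "S_circ_total k n = (\<Sum>l\<le>n. S_circ k n l)"

text \<open>binom(m, r-1) with the convention binom(m,-1) = 0 (b = 0 case).\<close>
definition coef :: "nat \<Rightarrow> nat \<Rightarrow> int" where
  "coef n b = (-1) ^ b *
     (int (if b = 0 then 0 else ((n - 2) - (b - 1)) choose (b - 1)) + int ((n - b) choose b))"

end

theory Submission
  imports Defs "HOL-Library.Infinite_Set"
begin

text \<open>A circular structure is a \<open>k\<close>-noncrossing digraph containing none of the \<open>n\<close> 1-arcs,
  which form an \<open>n\<close>-cycle. Inclusion-exclusion over the set \<open>B\<close> of 1-arcs forced to be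
  present gives a signed sum in which only matchings \<open>B\<close> of the cycle survive. For \<open>k \<ge> 2\<close> a
  1-arc never takes part in a \<open>k\<close>-crossing, so deleting a matching \<open>B\<close> together with its
  \<open>2 |B|\<close> endpoints and relabelling the remaining vertices monotonically is a bijection onto
  the \<open>k\<close>-noncrossing digraphs on \<open>n - 2 |B|\<close> vertices with equally many isolated vertices.
  Finally, the \<open>b\<close>-matchings of the cycle that avoid the arc \<open>(1, n)\<close> are those of a path
  on \<open>n\<close> vertices, and the others are \<open>(1, n)\<close> plus a \<open>(b - 1)\<close>-matching of a path on
  \<open>n - 2\<close> vertices; a path on \<open>m\<close> vertices has \<open>(m - b) choose b\<close> of them.\<close>

section \<open>Vertex-disjoint arc sets\<close>

definition verts :: "(nat \<times> nat) set \<Rightarrow> nat set" where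
  "verts A = (\<Union>a\<in>A. {fst a, snd a})"

lemma verts_image_map_prod: "verts (map_prod h h ` A) = h ` verts A"
  unfolding verts_def by force

lemma image_map_prod_inverse:
  assumes "\<And>v. v \<in> verts A \<Longrightarrow> g (h v) = v"
  shows "map_prod g g ` map_prod h h ` A = A"
proof -
  have "map_prod g g (map_prod h h a) = a" if "a \<in> A" for a
  proof -
    have "fst a \<in> verts A" "snd a \<in> verts A"
      using that unfolding verts_def by auto
    then show ?thesis
      by (simp add: assms prod_eq_iff)
  qed
  then show ?thesis
    by (simp add: image_image)
qed

lemma num_isolated_eq_card: "num_isolated n A = card ({1..n} - verts A)"
proof -
  have "{v \<in> {1..n}. \<forall>(i, j)\<in>A. v \<noteq> i \<and> v \<noteq> j} = {1..n} - verts A"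
    unfolding verts_def by force
  then show ?thesis
    unfolding num_isolated_def by simp
qed

lemma vertex_disjoint_subset: "vertex_disjoint A \<Longrightarrow> B \<subseteq> A \<Longrightarrow> vertex_disjoint B"
  unfolding vertex_disjoint_def by blast

lemma vertex_disjoint_insert:
  "vertex_disjoint (insert e B) \<longleftrightarrow>
     vertex_disjoint B \<and> (\<forall>x\<in>B. x \<noteq> e \<longrightarrow> {fst x, snd x} \<inter> {fst e, snd e} = {})"
  (is "_ \<longleftrightarrow> _ \<and> ?apart")
proof
  assume "vertex_disjoint (insert e B)"
  then show "vertex_disjoint B \<and> ?apart"
    unfolding vertex_disjoint_def by (meson insertCI)
next
  assume vd: "vertex_disjoint B \<and> ?apart"
  show "vertex_disjoint (insert e B)"
    unfolding vertex_disjoint_def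
  proof (intro ballI impI)
    fix a b assume "a \<in> insert e B" "b \<in> insert e B"
      and meet: "{fst a, snd a} \<inter> {fst b, snd b} \<noteq> {}"
    then consider "a = e" "b = e" | "a = e" "b \<in> B" | "a \<in> B" "b = e" | "a \<in> B" "b \<in> B"
      by blast
    then show "a = b"
      using vd meet unfolding vertex_disjoint_def by cases (simp_all add: Int_commute, metis+)
  qed
qed

lemma vertex_disjoint_Un:
  assumes "vertex_disjoint A" and "vertex_disjoint B" and "verts A \<inter> verts B = {}"
  shows "vertex_disjoint (A \<union> B)"
  unfolding vertex_disjoint_def
proof (intro ballI impI)
  fix a b assume "a \<in> A \<union> B" "b \<in> A \<union> B" and meet: "{fst a, snd a} \<inter> {fst b, snd b} \<noteq> {}"
  moreover have "\<not> (a \<in> A \<and> b \<in> B)" "\<not> (a \<in> B \<and> b \<in> A)"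
    using meet assms(3) unfolding verts_def by blast+
  ultimately show "a = b"
    using assms(1,2) unfolding vertex_disjoint_def by blast
qed

lemma vertex_disjoint_image_map_prod:
  assumes "inj_on h (verts A)" and "vertex_disjoint A"
  shows "vertex_disjoint (map_prod h h ` A)"
  unfolding vertex_disjoint_def
proof (intro ballI impI)
  fix a' b' assume a': "a' \<in> map_prod h h ` A" and b': "b' \<in> map_prod h h ` A"
    and meet: "{fst a', snd a'} \<inter> {fst b', snd b'} \<noteq> {}"
  obtain a b where a: "a \<in> A" "a' = map_prod h h a" and b: "b \<in> A" "b' = map_prod h h b"
    using a' b' by auto
  have "fst a \<in> verts A" "snd a \<in> verts A" "fst b \<in> verts A" "snd b \<in> verts A"
    using a b unfolding verts_def by auto
  then have "{fst a, snd a} \<inter> {fst b, snd b} \<noteq> {}"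
    using meet a b inj_onD[OF assms(1)] by (cases a, cases b) auto
  then show "a' = b'"
    using assms(2) a b unfolding vertex_disjoint_def by blast
qed

lemma card_verts:
  assumes "finite B" and "vertex_disjoint B" and "\<forall>(i, j)\<in>B. i \<noteq> j"
  shows "card (verts B) = 2 * card B"
proof -
  have "card (verts B) = (\<Sum>a\<in>B. card {fst a, snd a})"
    unfolding verts_def
    using assms(1,2) by (intro card_UN_disjoint) (auto simp: vertex_disjoint_def)
  also have "\<dots> = (\<Sum>a\<in>B. 2)"
    using assms(3) by (intro sum.cong) auto
  finally show ?thesis
    by simp
qed

section \<open>Crossings and 1-arcs\<close>

text \<open>For \<open>k = 0\<close> the definition of a crossing constrains no arc of \<open>A\<close>.\<close>

lemma has_k_crossing_0: "has_k_crossing 0 A"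
  unfolding has_k_crossing_def by (rule exI[of _ "\<lambda>_. (0, 1)"]) simp

lemma has_k_crossing_mono: "has_k_crossing k A \<Longrightarrow> A \<subseteq> A' \<Longrightarrow> has_k_crossing k A'"
  unfolding has_k_crossing_def by blast

lemma has_k_crossing_image:
  assumes h: "strict_mono_on X h" and "verts A \<subseteq> X" and "has_k_crossing k A"
  shows "has_k_crossing k (map_prod h h ` A)"
proof (cases "k = 0")
  case True
  then show ?thesis
    by (simp add: has_k_crossing_0)
next
  case False
  obtain s where sA: "\<forall>t<k. s t \<in> A"
    and mono: "\<forall>t. t + 1 < k \<longrightarrow> fst (s t) < fst (s (t + 1)) \<and> snd (s t) < snd (s (t + 1))"
    and last: "fst (s (k - 1)) < snd (s 0)"
    using \<open>has_k_crossing k A\<close> unfolding has_k_crossing_def by blast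
  have ends: "fst (s t) \<in> X" "snd (s t) \<in> X" if "t < k" for t
    using sA that \<open>verts A \<subseteq> X\<close> unfolding verts_def by blast+
  show ?thesis
    unfolding has_k_crossing_def
  proof (intro exI[of _ "map_prod h h \<circ> s"] conjI allI impI)
    show "(map_prod h h \<circ> s) t \<in> map_prod h h ` A" if "t < k" for t
      using sA that by auto
    show "fst ((map_prod h h \<circ> s) t) < fst ((map_prod h h \<circ> s) (t + 1))"
      and "snd ((map_prod h h \<circ> s) t) < snd ((map_prod h h \<circ> s) (t + 1))" if "t + 1 < k" for t
      using that mono ends[of t] ends[of "t + 1"] by (auto intro: strict_mono_onD[OF h])
    show "fst ((map_prod h h \<circ> s) (k - 1)) < snd ((map_prod h h \<circ> s) 0)"
      using last ends[of "k - 1"] ends[of 0] False by (auto intro: strict_mono_onD[OF h])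
  qed
qed

lemma chain_less:
  fixes g :: "nat \<Rightarrow> 'a :: order"
  assumes step: "\<forall>t. t + 1 < k \<longrightarrow> g t < g (t + 1)"
    and "t < t'" and "t' < k"
  shows "g t < g t'"
  using assms(2,3)
proof (induction t')
  case (Suc t')
  have "g t' < g (Suc t')"
    using step Suc.prems by auto
  moreover have "g t \<le> g t'"
    using Suc by (cases "t < t'") (auto simp: less_Suc_eq)
  ultimately show ?case
    by simp
qed simp

definition one_arcs :: "nat \<Rightarrow> (nat \<times> nat) set" where
  "one_arcs n = {(i, i + 1) | i. 1 \<le> i \<and> i + 1 \<le> n} \<union> {(1, n)}"

lemma finite_one_arcs: "finite (one_arcs n)"
proof -
  have "one_arcs n \<subseteq> {0..n+1} \<times> {0..n+1}"
    unfolding one_arcs_def by auto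
  then show ?thesis
    by (rule finite_subset) simp
qed

lemma circular_rna_iff: "circular_rna k n A \<longleftrightarrow> k_noncrossing k n A \<and> A \<inter> one_arcs n = {}"
  unfolding circular_rna_def one_arcs_def by auto

lemma matching_one_arcs_verts:
  assumes "n \<ge> 2" and "B \<subseteq> one_arcs n" and "vertex_disjoint B"
  shows "verts B \<subseteq> {1..n}" and "card (verts B) = 2 * card B"
proof -
  have "finite B"
    using assms(2) finite_one_arcs by (rule finite_subset)
  moreover have "\<forall>(i, j)\<in>B. i \<noteq> j"
    using assms(1,2) unfolding one_arcs_def by auto
  ultimately show "card (verts B) = 2 * card B"
    using assms(3) by (simp add: card_verts)
  show "verts B \<subseteq> {1..n}"
    using assms(1,2) unfolding one_arcs_def verts_def by auto
qed

lemma has_k_crossing_Diff_one_arcs: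
  assumes "k \<ge> 2" and "digraph n A" and "has_k_crossing k A"
  shows "has_k_crossing k (A - one_arcs n)"
proof -
  obtain s where sA: "\<forall>t<k. s t \<in> A"
    and mono: "\<forall>t. t + 1 < k \<longrightarrow> fst (s t) < fst (s (t + 1)) \<and> snd (s t) < snd (s (t + 1))"
    and last: "fst (s (k - 1)) < snd (s 0)"
    using \<open>has_k_crossing k A\<close> unfolding has_k_crossing_def by blast
  have fst_less: "fst (s t) < fst (s t')" and snd_less: "snd (s t) < snd (s t')"
    if "t < t'" "t' < k" for t t'
    using that mono chain_less[of k "\<lambda>t. fst (s t)"] chain_less[of k "\<lambda>t. snd (s t)"] by auto
  have bounds: "1 \<le> fst (s t)" "snd (s t) \<le> n" if "t < k" for t
    using sA that \<open>digraph n A\<close> unfolding digraph_def by auto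
  \<comment> \<open>With the crossing written \<open>i\<^sub>1 < \<dots> < i\<^sub>k < j\<^sub>1 < \<dots> < j\<^sub>k\<close>:
      \<open>i\<^sub>t < i\<^sub>k < j\<^sub>t < j\<^sub>k \<le> n\<close> for \<open>t < k\<close> and \<open>1 \<le> i\<^sub>1 < i\<^sub>k < j\<^sub>1 < j\<^sub>k\<close>,
      so no arc of the crossing joins neighbours or is \<open>(1, n)\<close>.\<close>
  have "s t \<notin> one_arcs n" if "t < k" for t
  proof (cases "t < k - 1")
    case True
    have "snd (s 0) \<le> snd (s t)"
      using snd_less[of 0 t] True that by (cases "t = 0") auto
    moreover have "fst (s t) < fst (s (k - 1))" and "snd (s t) < snd (s (k - 1))"
      using fst_less[of t "k - 1"] snd_less[of t "k - 1"] True by auto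
    ultimately have "fst (s t) < fst (s (k - 1))" "fst (s (k - 1)) < snd (s t)" "snd (s t) < n"
      using last bounds[of "k - 1"] \<open>k \<ge> 2\<close> by auto
    then show ?thesis
      unfolding one_arcs_def by (cases "s t") auto
  next
    case False
    then have "t = k - 1" "0 < t"
      using that \<open>k \<ge> 2\<close> by auto
    then have "fst (s 0) < fst (s t)" "fst (s t) < snd (s 0)" "snd (s 0) < snd (s t)"
      using fst_less[of 0 t] snd_less[of 0 t] last \<open>k \<ge> 2\<close> by auto
    then show ?thesis
      using bounds[of 0] \<open>k \<ge> 2\<close> unfolding one_arcs_def by (cases "s t") auto
  qed
  then show ?thesis
    unfolding has_k_crossing_def using sA mono last by blast
qed

section \<open>Relabelling vertices\<close>

definition noncrossing_diagrams :: "nat \<Rightarrow> nat set \<Rightarrow> nat \<Rightarrow> (nat \<times> nat) set set" where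
  "noncrossing_diagrams k X l =
     {A. (\<forall>(i, j)\<in>A. i \<in> X \<and> j \<in> X \<and> i < j) \<and> vertex_disjoint A \<and> \<not> has_k_crossing k A \<and>
         card (X - verts A) = l}"

lemma noncrossing_diagrams_atLeastAtMost:
  "noncrossing_diagrams k {1..n} l = {A. k_noncrossing k n A \<and> num_isolated n A = l}"
  unfolding noncrossing_diagrams_def k_noncrossing_def digraph_def num_isolated_eq_card by auto

lemma finite_noncrossing_diagrams:
  assumes "finite X"
  shows "finite (noncrossing_diagrams k X l)"
proof (rule finite_subset)
  show "noncrossing_diagrams k X l \<subseteq> Pow (X \<times> X)"
    unfolding noncrossing_diagrams_def by auto
qed (use assms in simp)

lemma verts_noncrossing_diagram: "A \<in> noncrossing_diagrams k X l \<Longrightarrow> verts A \<subseteq> X"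
  unfolding noncrossing_diagrams_def verts_def by auto

lemma strict_mono_on_the_inv_into:
  fixes h :: "'a :: linorder \<Rightarrow> 'b :: linorder"
  assumes "strict_mono_on X h"
  shows "strict_mono_on (h ` X) (the_inv_into X h)"
proof (rule strict_mono_onI)
  have inj: "inj_on h X"
    using assms by (rule strict_mono_on_imp_inj_on)
  fix u v assume "u \<in> h ` X" "v \<in> h ` X" "u < v"
  then obtain x y where "x \<in> X" "y \<in> X" "u = h x" "v = h y" "h x < h y"
    by blast
  then show "the_inv_into X h u < the_inv_into X h v"
    using strict_mono_on_less[OF assms] the_inv_into_f_f[OF inj] by simp
qed

lemma image_map_prod_noncrossing_diagrams:
  assumes h: "strict_mono_on X h" and A: "A \<in> noncrossing_diagrams k X l"
  shows "map_prod h h ` A \<in> noncrossing_diagrams k (h ` X) l"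
proof -
  let ?g = "the_inv_into X h"
  have inj: "inj_on h X"
    using h by (rule strict_mono_on_imp_inj_on)
  have VA: "verts A \<subseteq> X"
    using A by (rule verts_noncrossing_diagram)
  have left_inverse: "map_prod ?g ?g ` map_prod h h ` A = A"
    using VA the_inv_into_f_f[OF inj] by (intro image_map_prod_inverse) blast
  have "\<forall>(i, j)\<in>map_prod h h ` A. i \<in> h ` X \<and> j \<in> h ` X \<and> i < j"
  proof clarsimp
    fix i j assume "(i, j) \<in> A"
    then show "h i \<in> h ` X \<and> h j \<in> h ` X \<and> h i < h j"
      using A unfolding noncrossing_diagrams_def by (auto intro: strict_mono_onD[OF h])
  qed
  moreover have "vertex_disjoint (map_prod h h ` A)"
    using A VA inj_on_subset[OF inj]
    by (intro vertex_disjoint_image_map_prod) (auto simp: noncrossing_diagrams_def)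
  moreover have "\<not> has_k_crossing k (map_prod h h ` A)"
  proof
    assume "has_k_crossing k (map_prod h h ` A)"
    moreover have "verts (map_prod h h ` A) \<subseteq> h ` X"
      using VA by (auto simp: verts_image_map_prod)
    ultimately have "has_k_crossing k (map_prod ?g ?g ` map_prod h h ` A)"
      using has_k_crossing_image[OF strict_mono_on_the_inv_into[OF h]] by blast
    then show False
      using A unfolding left_inverse noncrossing_diagrams_def by simp
  qed
  moreover have "card (h ` X - verts (map_prod h h ` A)) = l"
  proof -
    have "h ` X - verts (map_prod h h ` A) = h ` (X - verts A)"
      unfolding verts_image_map_prod using inj VA by (simp add: inj_on_image_set_diff)
    also have "card \<dots> = card (X - verts A)"
      using inj by (intro card_image) (auto intro: inj_on_subset)
    finally show ?thesis
      using A unfolding noncrossing_diagrams_def by simp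
  qed
  ultimately show ?thesis
    unfolding noncrossing_diagrams_def by blast
qed

lemma card_noncrossing_diagrams_image:
  assumes h: "strict_mono_on X h"
  shows "card (noncrossing_diagrams k (h ` X) l) = card (noncrossing_diagrams k X l)"
proof -
  let ?g = "the_inv_into X h"
  have inj: "inj_on h X"
    using h by (rule strict_mono_on_imp_inj_on)
  have g: "strict_mono_on (h ` X) ?g"
    using h by (rule strict_mono_on_the_inv_into)
  have gh: "?g ` h ` X = X"
    using inj by simp
  have "bij_betw (\<lambda>A. map_prod h h ` A) (noncrossing_diagrams k X l)
          (noncrossing_diagrams k (h ` X) l)"
  proof (rule bij_betw_byWitness[where f' = "\<lambda>A. map_prod ?g ?g ` A"])
    show "\<forall>A\<in>noncrossing_diagrams k X l. map_prod ?g ?g ` map_prod h h ` A = A"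
      using verts_noncrossing_diagram the_inv_into_f_f[OF inj]
      by (intro ballI image_map_prod_inverse) blast
    show "\<forall>A\<in>noncrossing_diagrams k (h ` X) l. map_prod h h ` map_prod ?g ?g ` A = A"
      using verts_noncrossing_diagram f_the_inv_into_f[OF inj]
      by (intro ballI image_map_prod_inverse) blast
    show "(\<lambda>A. map_prod h h ` A) ` noncrossing_diagrams k X l \<subseteq> noncrossing_diagrams k (h ` X) l"
      using image_map_prod_noncrossing_diagrams[OF h] by blast
    show "(\<lambda>A. map_prod ?g ?g ` A) ` noncrossing_diagrams k (h ` X) l \<subseteq> noncrossing_diagrams k X l"
      using image_map_prod_noncrossing_diagrams[OF g] gh by fastforce
  qed
  then show ?thesis
    by (simp add: bij_betw_same_card)
qed

section \<open>Structures containing a matching of 1-arcs\<close>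

lemma Diff_in_noncrossing_diagrams:
  assumes A: "A \<in> noncrossing_diagrams k X l" and "B \<subseteq> A"
  shows "A - B \<in> noncrossing_diagrams k (X - verts B) l"
proof -
  have sub: "verts (A - B) \<subseteq> X - verts B"
    using A \<open>B \<subseteq> A\<close> verts_noncrossing_diagram[OF A]
    unfolding noncrossing_diagrams_def vertex_disjoint_def verts_def by blast
  have "\<forall>(i, j)\<in>A - B. i \<in> X - verts B \<and> j \<in> X - verts B \<and> i < j"
  proof clarify
    fix i j assume "(i, j) \<in> A" "(i, j) \<notin> B"
    moreover have "i \<in> verts (A - B)" "j \<in> verts (A - B)"
      using calculation unfolding verts_def by force+
    ultimately show "i \<in> X - verts B \<and> j \<in> X - verts B \<and> i < j"
      using sub A unfolding noncrossing_diagrams_def by auto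
  qed
  moreover have "X - verts A = (X - verts B) - verts (A - B)"
    using \<open>B \<subseteq> A\<close> unfolding verts_def by blast
  moreover have "\<not> has_k_crossing k (A - B)"
    using A has_k_crossing_mono[of k "A - B" A] unfolding noncrossing_diagrams_def by blast
  ultimately show ?thesis
    using A vertex_disjoint_subset[of A "A - B"] unfolding noncrossing_diagrams_def by auto
qed

lemma Un_one_arcs_in_noncrossing_diagrams:
  assumes "k \<ge> 2" and "n \<ge> 2" and B: "B \<subseteq> one_arcs n" "vertex_disjoint B"
    and A: "A \<in> noncrossing_diagrams k ({1..n} - verts B) l"
  shows "A \<union> B \<in> noncrossing_diagrams k {1..n} l"
proof -
  have arcs: "\<forall>(i, j)\<in>A \<union> B. i \<in> {1..n} \<and> j \<in> {1..n} \<and> i < j"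
    using A B \<open>n \<ge> 2\<close> unfolding noncrossing_diagrams_def one_arcs_def by auto
  have "vertex_disjoint (A \<union> B)"
    using A B(2) verts_noncrossing_diagram[OF A]
    by (intro vertex_disjoint_Un) (auto simp: noncrossing_diagrams_def)
  moreover have "\<not> has_k_crossing k (A \<union> B)"
  proof
    assume "has_k_crossing k (A \<union> B)"
    then have "has_k_crossing k (A \<union> B - one_arcs n)"
      using arcs \<open>k \<ge> 2\<close> by (intro has_k_crossing_Diff_one_arcs) (auto simp: digraph_def)
    then have "has_k_crossing k A"
      by (rule has_k_crossing_mono) (use B in blast)
    then show False
      using A unfolding noncrossing_diagrams_def by blast
  qed
  moreover have "{1..n} - verts (A \<union> B) = ({1..n} - verts B) - verts A"
    unfolding verts_def by blast
  ultimately show ?thesis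
    using A arcs unfolding noncrossing_diagrams_def by auto
qed

lemma card_noncrossing_diagrams_containing:
  assumes "k \<ge> 2" and "n \<ge> 2" and "B \<subseteq> one_arcs n" and "vertex_disjoint B"
  shows "card {A \<in> noncrossing_diagrams k {1..n} l. B \<subseteq> A} =
           card (noncrossing_diagrams k ({1..n} - verts B) l)"
proof -
  let ?V = "{1..n} - verts B"
  have "bij_betw (\<lambda>A. A - B) {A \<in> noncrossing_diagrams k {1..n} l. B \<subseteq> A}
          (noncrossing_diagrams k ?V l)"
  proof (rule bij_betw_byWitness[where f' = "\<lambda>A. A \<union> B"])
    show "\<forall>A\<in>{A \<in> noncrossing_diagrams k {1..n} l. B \<subseteq> A}. A - B \<union> B = A"
      by blast
    show "\<forall>A\<in>noncrossing_diagrams k ?V l. A \<union> B - B = A"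
      using verts_noncrossing_diagram unfolding verts_def by blast
    show "(\<lambda>A. A - B) ` {A \<in> noncrossing_diagrams k {1..n} l. B \<subseteq> A} \<subseteq>
            noncrossing_diagrams k ?V l"
      using Diff_in_noncrossing_diagrams by blast
    show "(\<lambda>A. A \<union> B) ` noncrossing_diagrams k ?V l \<subseteq>
            {A \<in> noncrossing_diagrams k {1..n} l. B \<subseteq> A}"
      using Un_one_arcs_in_noncrossing_diagrams[OF assms] by blast
  qed
  then show ?thesis
    by (rule bij_betw_same_card)
qed

lemma card_noncrossing_diagrams_containing_eq_f_k:
  assumes "k \<ge> 2" and "n \<ge> 2" and B: "B \<subseteq> one_arcs n" and "vertex_disjoint B"
  shows "card {A \<in> noncrossing_diagrams k {1..n} l. B \<subseteq> A} = f_k k (n - 2 * card B) l"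
proof -
  define V where "V = {1..n} - verts B"
  have card_V: "card V = n - 2 * card B"
    unfolding V_def using matching_one_arcs_verts[OF \<open>n \<ge> 2\<close> B \<open>vertex_disjoint B\<close>]
    by (simp add: card_Diff_subset[OF finite_subset])
  obtain h where "bij_betw h {..<card V} V" and h: "strict_mono_on {..<card V} h"
    using ex_bij_betw_strict_mono_card[of V] unfolding V_def by blast
  then have "V = h ` {..<card V}"
    by (simp add: bij_betw_def)
  then have "card (noncrossing_diagrams k V l) = card (noncrossing_diagrams k {..<card V} l)"
    using card_noncrossing_diagrams_image[OF h] by simp
  also have "\<dots> = card (noncrossing_diagrams k {1..card V} l)"
    using card_noncrossing_diagrams_image[of "{..<card V}" Suc]
    by (simp add: strict_mono_on_def image_Suc_lessThan)
  finally show ?thesis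
    using card_noncrossing_diagrams_containing[OF assms]
    unfolding V_def[symmetric] card_V f_k_def noncrossing_diagrams_atLeastAtMost by simp
qed

section \<open>Matchings of paths and cycles\<close>

definition matchings :: "(nat \<times> nat) set \<Rightarrow> nat \<Rightarrow> (nat \<times> nat) set set" where
  "matchings X b = {B. B \<subseteq> X \<and> vertex_disjoint B \<and> card B = b}"

lemma finite_matchings: "finite X \<Longrightarrow> finite (matchings X b)"
  by (rule finite_subset[of _ "Pow X"]) (auto simp: matchings_def)

lemma matchings_0:
  assumes "finite X"
  shows "matchings X 0 = {{}}"
proof (intro equalityI subsetI)
  fix B assume "B \<in> matchings X 0"
  then have "B \<subseteq> X" "card B = 0"
    by (auto simp: matchings_def)
  then show "B \<in> {{}}"
    using finite_subset[OF _ assms] by simp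
next
  fix B :: "(nat \<times> nat) set" assume "B \<in> {{}}"
  then show "B \<in> matchings X 0"
    by (simp add: matchings_def vertex_disjoint_def)
qed

lemma matchings_empty_Suc: "matchings {} (Suc b) = {}"
  unfolding matchings_def by simp

lemma matchings_insert_containing:
  assumes "finite X" and "e \<notin> X"
  shows "{B \<in> matchings (insert e X) (Suc b). e \<in> B} =
           insert e ` matchings {x \<in> X. {fst x, snd x} \<inter> {fst e, snd e} = {}} b"
    (is "?L = insert e ` matchings ?Y b")
proof
  show "?L \<subseteq> insert e ` matchings ?Y b"
  proof
    fix B assume "B \<in> ?L"
    then have B: "B \<subseteq> insert e X" "vertex_disjoint B" "card B = Suc b" "e \<in> B"
      unfolding matchings_def by auto
    then have "vertex_disjoint (insert e (B - {e}))"
      by (simp add: insert_absorb)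
    then have "vertex_disjoint (B - {e})"
      and "\<forall>x\<in>B - {e}. {fst x, snd x} \<inter> {fst e, snd e} = {}"
      unfolding vertex_disjoint_insert by auto
    moreover have "finite B"
      using B(1) \<open>finite X\<close> by (rule finite_subset[OF _ finite_insert[THEN iffD2]])
    ultimately have "B - {e} \<in> matchings ?Y b"
      using B unfolding matchings_def by auto
    then show "B \<in> insert e ` matchings ?Y b"
      using \<open>e \<in> B\<close> by (intro image_eqI[of _ _ "B - {e}"]) auto
  qed
  show "insert e ` matchings ?Y b \<subseteq> ?L"
  proof (rule image_subsetI)
    fix B assume "B \<in> matchings ?Y b"
    then have B: "B \<subseteq> ?Y" "vertex_disjoint B" "card B = b"
      by (simp_all add: matchings_def)
    then have "finite B" "e \<notin> B"
      using \<open>finite X\<close> \<open>e \<notin> X\<close> by (auto intro: finite_subset)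
    moreover have "vertex_disjoint (insert e B)"
      using B unfolding vertex_disjoint_insert by auto
    ultimately show "insert e B \<in> ?L"
      using B unfolding matchings_def by auto
  qed
qed

lemma card_matchings_insert:
  assumes "finite X" and "e \<notin> X"
  shows "card (matchings (insert e X) (Suc b)) =
           card (matchings X (Suc b)) +
           card (matchings {x \<in> X. {fst x, snd x} \<inter> {fst e, snd e} = {}} b)"
proof -
  let ?Y = "{x \<in> X. {fst x, snd x} \<inter> {fst e, snd e} = {}}"
  let ?L = "{B \<in> matchings (insert e X) (Suc b). e \<in> B}"
  have union: "matchings (insert e X) (Suc b) = matchings X (Suc b) \<union> ?L"
    and disjoint: "matchings X (Suc b) \<inter> ?L = {}"
    using \<open>e \<notin> X\<close> unfolding matchings_def by auto
  have "inj_on (insert e) (matchings ?Y b)"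
  proof (rule inj_onI)
    fix P Q assume "P \<in> matchings ?Y b" "Q \<in> matchings ?Y b" "insert e P = insert e Q"
    moreover have "e \<notin> P" "e \<notin> Q"
      using calculation(1,2) \<open>e \<notin> X\<close> unfolding matchings_def by auto
    ultimately show "P = Q"
      by (metis Diff_insert_absorb)
  qed
  then have "card ?L = card (matchings ?Y b)"
    unfolding matchings_insert_containing[OF assms] by (rule card_image)
  moreover have "card (matchings (insert e X) (Suc b)) = card (matchings X (Suc b)) + card ?L"
    using assms disjoint by (subst union) (simp add: card_Un_disjoint finite_matchings)
  ultimately show ?thesis
    by simp
qed

definition path_arcs :: "nat \<Rightarrow> nat \<Rightarrow> (nat \<times> nat) set" where
  "path_arcs a m = {(i, i + 1) | i. a \<le> i \<and> i + 1 < a + m}"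

lemma finite_path_arcs: "finite (path_arcs a m)"
proof -
  have "path_arcs a m \<subseteq> {0..a + m} \<times> {0..a + m}"
    unfolding path_arcs_def by auto
  then show ?thesis
    by (rule finite_subset) simp
qed

lemma card_matchings_path_arcs: "card (matchings (path_arcs a m) b) = (m - b) choose b"
proof (induction m arbitrary: b rule: less_induct)
  case (less m)
  show ?case
  proof (cases b)
    case 0
    then show ?thesis
      by (simp add: matchings_0 finite_path_arcs)
  next
    case (Suc c)
    show ?thesis
    proof (cases "m \<le> 1")
      case True
      then have "path_arcs a m = {}"
        unfolding path_arcs_def by auto
      then show ?thesis
        using True Suc by (simp add: matchings_empty_Suc)
    next
      case False
      define m' where "m' = m - 2"
      have m: "m = Suc (Suc m')"
        using False unfolding m'_def by simp
      define e where "e = (a + m', a + m' + 1)"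
      have "path_arcs a m = insert e (path_arcs a (Suc m'))" "e \<notin> path_arcs a (Suc m')"
        "{x \<in> path_arcs a (Suc m'). {fst x, snd x} \<inter> {fst e, snd e} = {}} = path_arcs a m'"
        unfolding m path_arcs_def e_def by auto
      then have "card (matchings (path_arcs a m) b) = ((m' - c) choose Suc c) + ((m' - c) choose c)"
        using less.IH[of "Suc m'" "Suc c"] less.IH[of m' c]
        unfolding m Suc by (simp add: card_matchings_insert finite_path_arcs)
      also have "\<dots> = (m - b) choose b"
        unfolding m Suc by (cases "c \<le> m'") (simp_all add: Suc_diff_le)
      finally show ?thesis .
    qed
  qed
qed

lemma coef_eq_card_matchings_one_arcs:
  assumes "n \<ge> 3"
  shows "coef n b = (-1) ^ b * int (card (matchings (one_arcs n) b))"
proof (cases b)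
  case 0
  then show ?thesis
    by (simp add: coef_def matchings_0 finite_one_arcs)
next
  case (Suc c)
  define e where "e = (1 :: nat, n)"
  have "one_arcs n = insert e (path_arcs 1 n)" "e \<notin> path_arcs 1 n"
    "{x \<in> path_arcs 1 n. {fst x, snd x} \<inter> {fst e, snd e} = {}} = path_arcs 2 (n - 2)"
    unfolding one_arcs_def path_arcs_def e_def using assms by auto
  then show ?thesis
    unfolding Suc coef_def
    by (simp add: card_matchings_insert finite_path_arcs card_matchings_path_arcs)
qed

section \<open>Inclusion-exclusion\<close>

lemma sum_Pow_neg_one_power_card:
  "finite X \<Longrightarrow> (\<Sum>T\<in>Pow X. (-1 :: int) ^ card T) = (if X = {} then 1 else 0)"
proof (cases "X = {}")
  case False
  assume "finite X"
  then have "card {T. T \<in> Pow X \<and> even (card T)} = card {T. T \<in> Pow X \<and> odd (card T)}"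
    using card_subsupersets_even_odd[of X "{}"] False by auto
  then have "(\<Sum>T\<in>Pow X. (-1 :: int) ^ card T) = 0"
    by (intro sum_alternating_cancels) (simp_all add: \<open>finite X\<close>)
  then show ?thesis
    using False by simp
qed simp

lemma card_disjoint_sieve:
  fixes U :: "'a set set"
  assumes "finite U" and "finite E"
  shows "int (card {A \<in> U. A \<inter> E = {}}) =
           (\<Sum>B\<in>Pow E. (-1) ^ card B * int (card {A \<in> U. B \<subseteq> A}))"
proof -
  have inner: "(\<Sum>B\<in>{B \<in> Pow E. B \<subseteq> A}. (-1 :: int) ^ card B) = (if A \<inter> E = {} then 1 else 0)"
    for A
  proof -
    have "{B \<in> Pow E. B \<subseteq> A} = Pow (A \<inter> E)"
      by auto
    then show ?thesis
      using assms(2) sum_Pow_neg_one_power_card[of "A \<inter> E"] by simp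
  qed
  have "int (card {A \<in> U. A \<inter> E = {}}) = (\<Sum>A\<in>U. if A \<inter> E = {} then 1 else 0)"
    using assms(1) by (simp add: sum.inter_filter[symmetric])
  also have "\<dots> = (\<Sum>A\<in>U. \<Sum>B\<in>{B \<in> Pow E. B \<subseteq> A}. (-1) ^ card B)"
    by (simp only: inner)
  also have "\<dots> = (\<Sum>B\<in>Pow E. \<Sum>A\<in>{A \<in> U. B \<subseteq> A}. (-1) ^ card B)"
    using assms by (intro sum.swap_restrict) simp_all
  also have "\<dots> = (\<Sum>B\<in>Pow E. (-1) ^ card B * int (card {A \<in> U. B \<subseteq> A}))"
    by (simp add: mult.commute)
  finally show ?thesis .
qed

lemma card_matching_one_arcs_le:
  assumes "n \<ge> 2" and "B \<subseteq> one_arcs n" and "vertex_disjoint B"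
  shows "2 * card B \<le> n"
proof -
  have "card (verts B) \<le> card {1..n}"
    using matching_one_arcs_verts(1)[OF assms] by (intro card_mono) auto
  then show ?thesis
    using matching_one_arcs_verts(2)[OF assms] by simp
qed

lemma sum_matchings_one_arcs_eq_sum_coef:
  fixes g :: "nat \<Rightarrow> int"
  assumes "n \<ge> 3"
  shows "(\<Sum>B\<in>{B \<in> Pow (one_arcs n). vertex_disjoint B}. (-1) ^ card B * g (card B)) =
           (\<Sum>b = 0..n div 2. coef n b * g b)"
proof -
  let ?M = "{B \<in> Pow (one_arcs n). vertex_disjoint B}"
  have "card ` ?M \<subseteq> {0..n div 2}"
  proof
    fix c assume "c \<in> card ` ?M"
    then obtain B where "B \<subseteq> one_arcs n" "vertex_disjoint B" "c = card B"
      by auto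
    then show "c \<in> {0..n div 2}"
      using card_matching_one_arcs_le[of n B] assms by simp
  qed
  then have "(\<Sum>B\<in>?M. (-1) ^ card B * g (card B)) =
               (\<Sum>b = 0..n div 2. \<Sum>B\<in>{B \<in> ?M. card B = b}. (-1) ^ card B * g (card B))"
    by (intro sum.group[symmetric]) (simp_all add: finite_one_arcs)
  also have "\<dots> = (\<Sum>b = 0..n div 2. \<Sum>B\<in>matchings (one_arcs n) b. (-1) ^ b * g b)"
  proof (rule sum.cong[OF refl])
    fix b
    have "{B \<in> ?M. card B = b} = matchings (one_arcs n) b"
      unfolding matchings_def by auto
    then show "(\<Sum>B\<in>{B \<in> ?M. card B = b}. (-1) ^ card B * g (card B)) =
                 (\<Sum>B\<in>matchings (one_arcs n) b. (-1) ^ b * g b)"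
      by (intro sum.cong) (simp_all add: matchings_def)
  qed
  also have "\<dots> = (\<Sum>b = 0..n div 2. coef n b * g b)"
    using coef_eq_card_matchings_one_arcs[OF assms] by (simp add: mult_ac)
  finally show ?thesis .
qed

lemma S_circ_eq_sum_coef_f_k:
  assumes "k \<ge> 2" and "n \<ge> 3"
  shows "int (S_circ k n l) = (\<Sum>b = 0..n div 2. coef n b * int (f_k k (n - 2 * b) l))"
proof -
  let ?U = "noncrossing_diagrams k {1..n} l"
  let ?M = "{B \<in> Pow (one_arcs n). vertex_disjoint B}"
  have "{A. circular_rna k n A \<and> num_isolated n A = l} = {A \<in> ?U. A \<inter> one_arcs n = {}}"
    unfolding noncrossing_diagrams_atLeastAtMost circular_rna_iff by auto
  then have "int (S_circ k n l) = int (card {A \<in> ?U. A \<inter> one_arcs n = {}})"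
    unfolding S_circ_def by simp
  also have "\<dots> = (\<Sum>B\<in>Pow (one_arcs n). (-1) ^ card B * int (card {A \<in> ?U. B \<subseteq> A}))"
    by (rule card_disjoint_sieve) (simp_all add: finite_noncrossing_diagrams finite_one_arcs)
  also have "\<dots> = (\<Sum>B\<in>?M. (-1) ^ card B * int (f_k k (n - 2 * card B) l))"
  proof (rule sum.mono_neutral_cong_right)
    show "\<forall>B\<in>Pow (one_arcs n) - ?M. (-1) ^ card B * int (card {A \<in> ?U. B \<subseteq> A}) = 0"
    proof
      fix B assume "B \<in> Pow (one_arcs n) - ?M"
      then have "{A \<in> ?U. B \<subseteq> A} = {}"
        using vertex_disjoint_subset unfolding noncrossing_diagrams_def by blast
      then show "(-1) ^ card B * int (card {A \<in> ?U. B \<subseteq> A}) = 0"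
        by (simp only: card.empty of_nat_0 mult_zero_right)
    qed
    show "(-1) ^ card B * int (card {A \<in> ?U. B \<subseteq> A}) =
            (-1) ^ card B * int (f_k k (n - 2 * card B) l)" if "B \<in> ?M" for B
      using that assms card_noncrossing_diagrams_containing_eq_f_k[of k n B l] by simp
  qed (auto simp: finite_one_arcs)
  also have "\<dots> = (\<Sum>b = 0..n div 2. coef n b * int (f_k k (n - 2 * b) l))"
    using assms(2) by (rule sum_matchings_one_arcs_eq_sum_coef)
  finally show ?thesis .
qed

lemma f_k_eq_0: "m < l \<Longrightarrow> f_k k m l = 0"
proof -
  assume "m < l"
  have "card ({1..m} - verts A) \<le> m" for A
    using card_mono[of "{1..m}" "{1..m} - verts A"] by simp
  then have "noncrossing_diagrams k {1..m} l = {}"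
    using \<open>m < l\<close> unfolding noncrossing_diagrams_def by (auto simp: not_le[symmetric])
  then show ?thesis
    unfolding f_k_def noncrossing_diagrams_atLeastAtMost[symmetric] by simp
qed

lemma sum_coef_f_k_truncate:
  "(\<Sum>b = 0..n div 2. coef n b * int (f_k k (n - 2 * b) l)) =
     (\<Sum>b = 0..(n - l) div 2. coef n b * int (f_k k (n - 2 * b) l))"
  by (rule sum.mono_neutral_left[symmetric]) (auto simp: f_k_eq_0)

lemma sum_f_k_atMost:
  "m \<le> n \<Longrightarrow> (\<Sum>l\<le>n. int (f_k k m l)) = (\<Sum>l = 0..m. int (f_k k m l))"
  by (rule sum.mono_neutral_right) (auto simp: f_k_eq_0)

theorem theorem3p5:
  fixes k n l :: nat
  assumes "k \<ge> 2" and "n \<ge> 3"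
  shows "int (S_circ k n l) =
           (\<Sum>b = 0..(n - l) div 2. coef n b * int (f_k k (n - 2 * b) l))
         \<and> int (S_circ_total k n) =
           (\<Sum>b = 0..n div 2. coef n b * (\<Sum>l' = 0..n - 2 * b. int (f_k k (n - 2 * b) l')))"
proof
  show "int (S_circ k n l) = (\<Sum>b = 0..(n - l) div 2. coef n b * int (f_k k (n - 2 * b) l))"
    using S_circ_eq_sum_coef_f_k[OF assms] by (simp add: sum_coef_f_k_truncate)
  have "int (S_circ_total k n) = (\<Sum>l'\<le>n. \<Sum>b = 0..n div 2. coef n b * int (f_k k (n - 2 * b) l'))"
    unfolding S_circ_total_def by (simp add: S_circ_eq_sum_coef_f_k[OF assms])
  also have "\<dots> = (\<Sum>b = 0..n div 2. coef n b * (\<Sum>l'\<le>n. int (f_k k (n - 2 * b) l')))"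
    by (subst sum.swap) (simp add: sum_distrib_left)
  also have "\<dots> = (\<Sum>b = 0..n div 2. coef n b * (\<Sum>l' = 0..n - 2 * b. int (f_k k (n - 2 * b) l')))"
    by (simp add: sum_f_k_atMost)
  finally show "int (S_circ_total k n) =
      (\<Sum>b = 0..n div 2. coef n b * (\<Sum>l' = 0..n - 2 * b. int (f_k k (n - 2 * b) l')))" .
qed

end
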